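(* Let $s\ge2$ and let $Q^*=\|q_{ik}\|$ ($i\in\{0,\dots,s-1\}$, $k\in\mathbb N$) define a $Q^*$-expansion of $[0,1]$ with $\inf_{i,k}q_{ik}>0$. Then the family $\varPhi$ of (interiors of) $Q^*$-cylinders is faithful for packing dimension calculation: $\dim_P(E,\varPhi)=\dim_{P(\mathit{unc})}(E)$ for every $E\subset[0,1]$.
   Context: A $Q^*$-expansion is a $\tilde Q$-expansion with $N_k=s$ for all $k$: $q_{ik}>0$, $\sum_iq_{ik}=1$, $\prod_k\max_iq_{ik}=0$, and $x=\sum_k\beta_{a_kk}\prod_{j<k}q_{a_jj}$ with $\beta_{ik}=\sum_{l<i}q_{lk}$; the rank-$n$ cylinder $\varDelta_{c_1\dots c_n}=\{x: a_j(x)=c_j,\ j\le n\}$ is an interval of length $\prod_{j\le n}q_{c_jj}$. In $\mathbb R$: an uncentered $\varepsilon$-packing of $E$ is a countable family of pairwise disjoint open intervals of length $\le\varepsilon$ each meeting $E$; $\mathcal P^\alpha_{\varepsilon(\mathit{unc})}(E)=\sup\sum|E_i|^\alpha$, $\mathcal P^\alpha_{0(\mathit{unc})}=\lim_{\varepsilon\to0}$, $\mathcal P^\alpha_{(\mathit{unc})}(E)=\inf\{\sum_j\mathcal P^\alpha_{0(\mathit{unc})}(E_j):E\subset\bigcup E_j\}$, $\dim_{P(\mathit{unc})}(E)=\inf\{\alpha:\mathcal P^\alpha_{(\mathit{unc})}(E)=0\}$; $\dim_P(E,\varPhi)$ is the same using only packings by intervals from $\varPhi$. *)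

theory Defs
  imports "HOL-Analysis.Analysis"
begin

text \<open>The matrix Q* = (q i k), digits i < s, positions k :: nat (0-based).\<close>

definition Qstar_matrix :: "nat \<Rightarrow> (nat \<Rightarrow> nat \<Rightarrow> real) \<Rightarrow> bool" where
  "Qstar_matrix s q \<longleftrightarrow>
     (\<forall>i<s. \<forall>k. q i k > 0) \<and>
     (\<forall>k. (\<Sum>i<s. q i k) = 1) \<and>
     (\<lambda>n. \<Prod>k<n. Max ((\<lambda>i. q i k) ` {..<s})) \<longlonglongrightarrow> 0"

definition qbeta :: "(nat \<Rightarrow> nat \<Rightarrow> real) \<Rightarrow> nat \<Rightarrow> nat \<Rightarrow> real" where
  "qbeta q i k = (\<Sum>l<i. q l k)"

definition cyl_left :: "(nat \<Rightarrow> nat \<Rightarrow> real) \<Rightarrow> nat list \<Rightarrow> real" where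
  "cyl_left q c = (\<Sum>k<length c. qbeta q (c!k) k * (\<Prod>j<k. q (c!j) j))"

definition cyl_len :: "(nat \<Rightarrow> nat \<Rightarrow> real) \<Rightarrow> nat list \<Rightarrow> real" where
  "cyl_len q c = (\<Prod>j<length c. q (c!j) j)"

definition Qstar_cyl_family :: "nat \<Rightarrow> (nat \<Rightarrow> nat \<Rightarrow> real) \<Rightarrow> real set set" where
  "Qstar_cyl_family s q =
     {{cyl_left q c <..< cyl_left q c + cyl_len q c} | c. set c \<subseteq> {..<s}}"

definition packing :: "(real set \<Rightarrow> bool) \<Rightarrow> real \<Rightarrow> real set \<Rightarrow> (real \<times> real) set \<Rightarrow> bool" where
  "packing adm \<epsilon> E P \<longleftrightarrow>
     countable P \<and>
     (\<forall>(a,b)\<in>P. a < b \<and> adm {a<..<b} \<and> b - a \<le> \<epsilon> \<and> {a<..<b} \<inter> E \<noteq> {}) \<and>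
     (\<forall>p\<in>P. \<forall>p'\<in>P. p \<noteq> p' \<longrightarrow> {fst p<..<snd p} \<inter> {fst p'<..<snd p'} = {})"

definition packing_pre_eps :: "(real set \<Rightarrow> bool) \<Rightarrow> real \<Rightarrow> real \<Rightarrow> real set \<Rightarrow> ennreal" where
  "packing_pre_eps adm \<alpha> \<epsilon> E =
     (SUP P \<in> {P. packing adm \<epsilon> E P}. infsum (\<lambda>(a,b). ennreal ((b - a) powr \<alpha>)) P)"

text \<open>The limit as epsilon tends to 0 (the pre-measure is monotone in epsilon, so the limit
  is the infimum over epsilon > 0).\<close>

definition packing_pre :: "(real set \<Rightarrow> bool) \<Rightarrow> real \<Rightarrow> real set \<Rightarrow> ennreal" where
  "packing_pre adm \<alpha> E = (INF \<epsilon> \<in> {0<..}. packing_pre_eps adm \<alpha> \<epsilon> E)"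

definition packing_measure :: "(real set \<Rightarrow> bool) \<Rightarrow> real \<Rightarrow> real set \<Rightarrow> ennreal" where
  "packing_measure adm \<alpha> E =
     (INF C \<in> {C :: nat \<Rightarrow> real set. E \<subseteq> (\<Union>j. C j)}. (\<Sum>j. packing_pre adm \<alpha> (C j)))"

definition packing_dim :: "(real set \<Rightarrow> bool) \<Rightarrow> real set \<Rightarrow> ereal" where
  "packing_dim adm E = Inf {ereal \<alpha> | \<alpha>. \<alpha> \<ge> 0 \<and> packing_measure adm \<alpha> E = 0}"

definition packing_dim_unc :: "real set \<Rightarrow> ereal" where
  "packing_dim_unc E = packing_dim (\<lambda>_. True) E"

definition packing_dim_fam :: "real set \<Rightarrow> real set set \<Rightarrow> ereal" where
  "packing_dim_fam E \<Phi> = packing_dim (\<lambda>I. I \<in> \<Phi>) E"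

end

theory Submission
  imports Defs
begin

text \<open>Every point off the countable set of cylinder endpoints lies inside cylinders of every
  length scale h, with length between \<delta> h and h. Given an arbitrary packing by intervals of
  length about h = 2^-m, one therefore finds a packing by cylinders of length about \<delta> h that is
  at least a twelfth as large, so scale m contributes at most a constant times
  2^(m (\<alpha> - \<beta>)) times the cylinder \<alpha>-premeasure to the uncentered \<beta>-premeasure. Summing
  the geometric series gives P^\<beta>_unc \<le> K P^\<alpha>_\<Phi> for \<beta> > \<alpha> off the endpoint set, which
  itself has packing measure 0. Hence dim_P(E, \<Phi>) \<ge> dim_P(unc)(E); the converse is monotonicity.\<close>

lemma qbeta_Suc: "qbeta q (Suc i) k = qbeta q i k + q i k"
  unfolding qbeta_def by simp

lemma cyl_len_snoc: "cyl_len q (c @ [i]) = cyl_len q c * q i (length c)"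
  unfolding cyl_len_def by (simp add: nth_append)

lemma cyl_left_snoc: "cyl_left q (c @ [i]) = cyl_left q c + qbeta q i (length c) * cyl_len q c"
proof -
  have "(\<Sum>k<length c. qbeta q ((c @ [i]) ! k) k * (\<Prod>j<k. q ((c @ [i]) ! j) j))
      = (\<Sum>k<length c. qbeta q (c ! k) k * (\<Prod>j<k. q (c ! j) j))"
    by (intro sum.cong refl) (simp add: nth_append)
  moreover have "(\<Prod>j<length c. q ((c @ [i]) ! j) j) = cyl_len q c"
    unfolding cyl_len_def by (intro prod.cong refl) (simp add: nth_append)
  ultimately show ?thesis unfolding cyl_left_def by simp
qed

lemma ex_independent_subset:
  assumes "finite A" "\<And>v. v \<in> A \<Longrightarrow> R v v" "\<And>v w. R v w \<Longrightarrow> R w v"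
    and "\<And>v. v \<in> A \<Longrightarrow> card {w\<in>A. R v w} \<le> d"
  shows "\<exists>B\<subseteq>A. (\<forall>v\<in>B. \<forall>w\<in>B. v \<noteq> w \<longrightarrow> \<not> R v w) \<and> card A \<le> d * card B"
  using assms
proof (induction "card A" arbitrary: A rule: less_induct)
  case less
  show ?case
  proof (cases "A = {}")
    case True
    then show ?thesis by auto
  next
    case False
    then obtain v where v: "v \<in> A" by auto
    define N where "N = {w\<in>A. R v w}"
    define A' where "A' = A - N"
    have "v \<in> N" "N \<subseteq> A" "finite N"
      using v less.prems(1,2) finite_subset by (auto simp: N_def)
    then have card_A: "card A = card A' + card N" and "card N > 0"
      using less.prems(1) by (auto simp: A'_def card_Diff_subset card_mono card_gt_0_iff)
    then have "card A' < card A" by linarith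
    moreover have "finite A'" using less.prems(1) by (simp add: A'_def)
    moreover have "R w w" if "w \<in> A'" for w using less.prems(2) that by (simp add: A'_def)
    moreover have "card {u\<in>A'. R w u} \<le> d" if "w \<in> A'" for w
    proof -
      have "card {u\<in>A'. R w u} \<le> card {u\<in>A. R w u}"
        using less.prems(1) by (intro card_mono) (auto simp: A'_def)
      also have "\<dots> \<le> d" using less.prems(4) that by (auto simp: A'_def)
      finally show ?thesis .
    qed
    ultimately obtain B' where B': "B' \<subseteq> A'" "\<forall>v\<in>B'. \<forall>w\<in>B'. v \<noteq> w \<longrightarrow> \<not> R v w"
        "card A' \<le> d * card B'"
      using less.hyps[of A'] less.prems(3) by blast
    have "finite B'" "v \<notin> B'"
      using B'(1) less.prems(1) \<open>v \<in> N\<close> finite_subset by (auto simp: A'_def)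
    moreover have "card N \<le> d" using less.prems(4)[OF v] by (simp add: N_def)
    ultimately have "card A \<le> d * card (insert v B')" using card_A B'(3) by simp
    moreover have "\<forall>x\<in>insert v B'. \<forall>y\<in>insert v B'. x \<noteq> y \<longrightarrow> \<not> R x y"
      using B' less.prems(3) by (auto simp: A'_def N_def)
    moreover have "insert v B' \<subseteq> A" using B'(1) v by (auto simp: A'_def)
    ultimately show ?thesis by (intro exI[of _ "insert v B'"]) simp
  qed
qed

lemma sum_lengths_disjoint_intervals_le:
  fixes P :: "(real \<times> real) set"
  assumes "finite P" "l \<le> u" "\<forall>p\<in>P. fst p < snd p \<and> l \<le> fst p \<and> snd p \<le> u"
    and "\<forall>p\<in>P. \<forall>p'\<in>P. p \<noteq> p' \<longrightarrow> {fst p<..<snd p} \<inter> {fst p'<..<snd p'} = {}"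
  shows "(\<Sum>p\<in>P. snd p - fst p) \<le> u - l"
  using assms
proof (induction P arbitrary: u rule: finite_ranking_induct[where f = fst])
  case empty
  then show ?case by simp
next
  case (insert x S)
  show ?case
  proof (cases "x \<in> S")
    case True
    then show ?thesis using insert by (simp add: insert_absorb)
  next
    case False
    \<comment> \<open>x has the largest left endpoint, so disjointness puts every other interval left of it\<close>
    have "snd y \<le> fst x" if y: "y \<in> S" for y
    proof (rule ccontr)
      assume "\<not> snd y \<le> fst x"
      moreover have "fst x < snd x" "fst y < snd y" using insert.prems(2) y by auto
      ultimately have "(fst x + min (snd x) (snd y)) / 2 \<in> {fst y<..<snd y} \<inter> {fst x<..<snd x}"
        using insert.hyps(2)[OF y] by (auto simp: min_def)
      moreover have "{fst y<..<snd y} \<inter> {fst x<..<snd x} = {}"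
        using insert.prems(3) y False by (metis insertCI)
      ultimately show False by blast
    qed
    moreover have "l \<le> fst x" "\<forall>p\<in>S. fst p < snd p \<and> l \<le> fst p \<and> snd p \<le> u"
      "\<forall>p\<in>S. \<forall>p'\<in>S. p \<noteq> p' \<longrightarrow> {fst p<..<snd p} \<inter> {fst p'<..<snd p'} = {}"
      using insert.prems(2,3) by auto
    ultimately have "(\<Sum>p\<in>S. snd p - fst p) \<le> fst x - l"
      using insert.IH[of "fst x"] by auto
    then show ?thesis using False insert.hyps(1) insert.prems(2) by simp
  qed
qed

lemma card_disjoint_intervals_le:
  fixes P :: "(real \<times> real) set"
  assumes "finite P" "l \<le> u" "\<forall>p\<in>P. fst p < snd p \<and> l \<le> fst p \<and> snd p \<le> u"
    and "\<forall>p\<in>P. \<forall>p'\<in>P. p \<noteq> p' \<longrightarrow> {fst p<..<snd p} \<inter> {fst p'<..<snd p'} = {}"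
    and "\<forall>p\<in>P. w \<le> snd p - fst p"
  shows "real (card P) * w \<le> u - l"
proof -
  have "real (card P) * w = (\<Sum>p\<in>P. w)" by simp
  also have "\<dots> \<le> (\<Sum>p\<in>P. snd p - fst p)" using assms(5) by (intro sum_mono) auto
  also have "\<dots> \<le> u - l" by (rule sum_lengths_disjoint_intervals_le[OF assms(1-4)])
  finally show ?thesis .
qed

text \<open>If J p' meets J p, then p' lies within 3h of X p; pairwise disjoint intervals longer than
  h/2 fit there at most 12 times, so a greedy choice of pairwise disjoint J's keeps a twelfth of P.\<close>

lemma disjoint_subfamily_at_scale:
  fixes P :: "(real \<times> real) set" and J :: "real \<times> real \<Rightarrow> real \<times> real"
  assumes "finite P" "0 < h"
    and disjoint: "\<forall>p\<in>P. \<forall>p'\<in>P. p \<noteq> p' \<longrightarrow> {fst p<..<snd p} \<inter> {fst p'<..<snd p'} = {}"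
    and scale: "\<And>p. p \<in> P \<Longrightarrow> h / 2 < snd p - fst p \<and> snd p - fst p \<le> h"
    and J: "\<And>p. p \<in> P \<Longrightarrow> X p \<in> {fst p<..<snd p} \<inter> {fst (J p)<..<snd (J p)}
      \<and> snd (J p) - fst (J p) \<le> h"
  shows "\<exists>B\<subseteq>P. inj_on J B \<and> card P \<le> 12 * card B \<and> (\<forall>p\<in>B. \<forall>p'\<in>B. p \<noteq> p' \<longrightarrow>
           {fst (J p)<..<snd (J p)} \<inter> {fst (J p')<..<snd (J p')} = {})"
proof -
  define R where "R p p' \<longleftrightarrow> {fst (J p)<..<snd (J p)} \<inter> {fst (J p')<..<snd (J p')} \<noteq> {}"
    for p p'
  have R_refl: "R p p" if "p \<in> P" for p
    using J[OF that] by (auto simp: R_def)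
  have R_sym: "R p p' \<Longrightarrow> R p' p" for p p' by (auto simp: R_def)
  have R_degree: "card {p'\<in>P. R p p'} \<le> 12" if p: "p \<in> P" for p
  proof -
    define A where "A = {p'\<in>P. R p p'}"
    have "finite A" "A \<subseteq> P" using \<open>finite P\<close> by (auto simp: A_def)
    have inside: "X p - 3 * h \<le> fst p' \<and> snd p' \<le> X p + 3 * h" if "p' \<in> A" for p'
    proof -
      obtain y where y: "y \<in> {fst (J p)<..<snd (J p)}" "y \<in> {fst (J p')<..<snd (J p')}"
        using \<open>p' \<in> A\<close> unfolding A_def R_def by blast
      have "p' \<in> P" using \<open>p' \<in> A\<close> by (simp add: A_def)
      show ?thesis using J[OF p] J[OF \<open>p' \<in> P\<close>] scale[OF \<open>p' \<in> P\<close>] y by auto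
    qed
    have "real (card A) * (h / 2) \<le> (X p + 3 * h) - (X p - 3 * h)"
    proof (rule card_disjoint_intervals_le)
      show "\<forall>p'\<in>A. fst p' < snd p' \<and> X p - 3 * h \<le> fst p' \<and> snd p' \<le> X p + 3 * h"
        using inside scale \<open>0 < h\<close> \<open>A \<subseteq> P\<close> by fastforce
      show "\<forall>p'\<in>A. \<forall>p''\<in>A. p' \<noteq> p'' \<longrightarrow> {fst p'<..<snd p'} \<inter> {fst p''<..<snd p''} = {}"
        using disjoint \<open>A \<subseteq> P\<close> by blast
      show "\<forall>p'\<in>A. h / 2 \<le> snd p' - fst p'"
        using scale \<open>A \<subseteq> P\<close> less_imp_le by blast
    qed (use \<open>finite A\<close> \<open>0 < h\<close> in auto)
    then show ?thesis using \<open>0 < h\<close> by (simp add: A_def field_simps)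
  qed
  obtain B where B: "B \<subseteq> P" "\<forall>v\<in>B. \<forall>w\<in>B. v \<noteq> w \<longrightarrow> \<not> R v w" "card P \<le> 12 * card B"
    using ex_independent_subset[OF \<open>finite P\<close>, of R 12] R_refl R_sym R_degree by blast
  have "inj_on J B"
  proof (rule inj_onI)
    fix p p' assume "p \<in> B" "p' \<in> B" "J p = J p'"
    then have "R p p'" using R_refl[of p] B(1) by (auto simp: R_def)
    then show "p = p'" using B(2) \<open>p \<in> B\<close> \<open>p' \<in> B\<close> by blast
  qed
  then show ?thesis using B unfolding R_def by blast
qed

lemma ex_dyadic_scale:
  fixes t :: real
  assumes "0 < t" "t \<le> 1"
  shows "\<exists>m. (1/2) ^ Suc m < t \<and> t \<le> (1/2) ^ m"
proof -
  define P where "P m \<longleftrightarrow> (1/2::real) ^ Suc m < t" for m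
  obtain n where "(1/2::real) ^ n < t" using real_arch_pow_inv[OF assms(1), of "1/2"] by auto
  moreover have "(1/2::real) ^ Suc n < (1/2) ^ n" by simp
  ultimately have "P n" unfolding P_def by linarith
  define m where "m = (LEAST m. P m)"
  have "P m" unfolding m_def by (rule LeastI[of P, OF \<open>P n\<close>])
  moreover have "t \<le> (1/2) ^ m"
  proof (cases m)
    case 0
    then show ?thesis using assms by simp
  next
    case (Suc k)
    then have "\<not> P k" unfolding m_def by (metis lessI not_less_Least)
    then show ?thesis using Suc unfolding P_def by simp
  qed
  ultimately show ?thesis unfolding P_def by blast
qed

lemma half_power_powr: "((1/2::real) ^ m) powr x = (2 powr (-x)) ^ m"
proof -
  have "(1/2::real) ^ m = 2 powr (- real m)"
    by (simp add: powr_minus powr_realpow power_one_over inverse_eq_divide)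
  then show ?thesis by (simp add: powr_powr powr_power mult.commute)
qed

lemma sum_power_le_geometric:
  fixes r :: real
  assumes "0 \<le> r" "r < 1" "finite I"
  shows "(\<Sum>m\<in>I. r ^ m) \<le> 1 / (1 - r)"
proof -
  have "(\<Sum>m\<in>I. r ^ m) \<le> (\<Sum>m. r ^ m)"
    using assms by (intro sum_le_suminf summable_geometric) auto
  also have "\<dots> = 1 / (1 - r)" using assms by (intro suminf_geometric) auto
  finally show ?thesis .
qed

lemma packing_interval:
  assumes "packing adm \<epsilon> E P" "(a, b) \<in> P"
  shows "a < b" "adm {a<..<b}" "b - a \<le> \<epsilon>" "{a<..<b} \<inter> E \<noteq> {}"
  using bspec[OF conjunct1[OF conjunct2[OF assms(1)[unfolded packing_def]]] assms(2)] by simp_all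

lemma packing_disjoint:
  assumes "packing adm \<epsilon> E P" "p \<in> P" "p' \<in> P" "p \<noteq> p'"
  shows "{fst p<..<snd p} \<inter> {fst p'<..<snd p'} = {}"
  using assms unfolding packing_def by blast

lemma packing_mono:
  assumes "packing adm \<epsilon> A P" "\<And>I. adm I \<Longrightarrow> adm' I" "\<epsilon> \<le> \<epsilon>'" "A \<subseteq> A'" "P' \<subseteq> P"
  shows "packing adm' \<epsilon>' A' P'"
proof -
  have "countable P'" using assms(1,5) countable_subset unfolding packing_def by blast
  moreover have "\<forall>(a,b)\<in>P'. a < b \<and> adm' {a<..<b} \<and> b - a \<le> \<epsilon>' \<and> {a<..<b} \<inter> A' \<noteq> {}"
  proof (intro ballI, clarify)
    fix a b assume "(a, b) \<in> P'"
    then have "a < b \<and> adm {a<..<b} \<and> b - a \<le> \<epsilon> \<and> {a<..<b} \<inter> A \<noteq> {}"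
      using assms(1,5) unfolding packing_def by blast
    then show "a < b \<and> adm' {a<..<b} \<and> b - a \<le> \<epsilon>' \<and> {a<..<b} \<inter> A' \<noteq> {}"
      using assms(2-4) by auto
  qed
  moreover have "\<forall>p\<in>P'. \<forall>p'\<in>P'. p \<noteq> p' \<longrightarrow> {fst p<..<snd p} \<inter> {fst p'<..<snd p'} = {}"
    using assms(1,5) unfolding packing_def by blast
  ultimately show ?thesis unfolding packing_def by blast
qed

lemma packing_pre_eps_mono:
  assumes "\<And>I. adm I \<Longrightarrow> adm' I" "\<epsilon> \<le> \<epsilon>'" "A \<subseteq> A'"
  shows "packing_pre_eps adm \<alpha> \<epsilon> A \<le> packing_pre_eps adm' \<alpha> \<epsilon>' A'"
  unfolding packing_pre_eps_def
  by (rule SUP_subset_mono) (use packing_mono[OF _ assms order_refl] in auto)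

lemma packing_pre_mono:
  assumes "\<And>I. adm I \<Longrightarrow> adm' I" "A \<subseteq> A'"
  shows "packing_pre adm \<alpha> A \<le> packing_pre adm' \<alpha> A'"
  unfolding packing_pre_def
proof (rule INF_mono)
  fix \<epsilon> :: real assume "\<epsilon> \<in> {0<..}"
  then show "\<exists>\<epsilon>'\<in>{0<..}. packing_pre_eps adm \<alpha> \<epsilon>' A \<le> packing_pre_eps adm' \<alpha> \<epsilon> A'"
    using packing_pre_eps_mono[OF assms(1) order_refl assms(2)] by (intro bexI)
qed

lemma packing_measure_mono:
  assumes "\<And>I. adm I \<Longrightarrow> adm' I"
  shows "packing_measure adm \<alpha> E \<le> packing_measure adm' \<alpha> E"
  unfolding packing_measure_def
proof (rule INF_mono)
  fix C :: "nat \<Rightarrow> real set" assume "C \<in> {C. E \<subseteq> (\<Union>j. C j)}"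
  moreover have "(\<Sum>j. packing_pre adm \<alpha> (C j)) \<le> (\<Sum>j. packing_pre adm' \<alpha> (C j))"
    by (intro suminf_le summableI packing_pre_mono[OF assms order_refl])
  ultimately show "\<exists>C'\<in>{C. E \<subseteq> (\<Union>j. C j)}.
      (\<Sum>j. packing_pre adm \<alpha> (C' j)) \<le> (\<Sum>j. packing_pre adm' \<alpha> (C j))"
    by (intro bexI)
qed

lemma infsum_powr_eq_SUP_finite:
  "infsum (\<lambda>(a,b). ennreal ((b - a) powr \<alpha>)) P
     = (SUP G\<in>{G. finite G \<and> G \<subseteq> P}. ennreal (\<Sum>p\<in>G. (snd p - fst p) powr \<alpha>))"
proof -
  have "infsum (\<lambda>(a,b). ennreal ((b - a) powr \<alpha>)) P
     = (SUP G\<in>{G. finite G \<and> G \<subseteq> P}. sum (\<lambda>(a,b). ennreal ((b - a) powr \<alpha>)) G)"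
    by (rule nonneg_infsum_complete) auto
  also have "\<dots> = (SUP G\<in>{G. finite G \<and> G \<subseteq> P}. ennreal (\<Sum>p\<in>G. (snd p - fst p) powr \<alpha>))"
    by (intro SUP_cong refl) (simp add: sum_ennreal case_prod_unfold)
  finally show ?thesis .
qed

lemma ennreal_le_mult_if_greater:
  fixes a b :: ennreal and k :: real
  assumes "k > 0" and "\<And>y. a < y \<Longrightarrow> b \<le> ennreal k * y"
  shows "b \<le> ennreal k * a"
proof (cases a)
  case (real r)
  show ?thesis
  proof (rule ennreal_le_epsilon)
    fix e :: real assume e: "0 < e"
    have "a < ennreal (r + e / k)" using real e assms(1) by (simp add: ennreal_less_iff)
    then have "b \<le> ennreal k * ennreal (r + e / k)" by (rule assms(2))
    also have "\<dots> = ennreal (k * (r + e / k))"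
      using assms(1) real e by (intro ennreal_mult[symmetric]) auto
    also have "k * (r + e / k) = k * r + e" using assms(1) by (simp add: field_simps)
    also have "\<dots> = ennreal (k * r) + ennreal e" using assms(1) real e by (intro ennreal_plus) auto
    also have "ennreal (k * r) = ennreal k * a" using assms(1) real by (simp add: ennreal_mult)
    finally show "b \<le> ennreal k * a + ennreal e" .
  qed
next
  case top
  then show ?thesis using assms(1) by (simp add: ennreal_mult_top)
qed

lemma packing_pre_singleton:
  assumes "\<beta> > 0"
  shows "packing_pre adm \<beta> {x} = 0"
proof -
  have "packing_pre adm \<beta> {x} \<le> 0 + ennreal e" if e: "e > 0" for e
  proof -
    define \<epsilon> where "\<epsilon> = e powr (1 / \<beta>)"
    have "\<epsilon> > 0" using e by (simp add: \<epsilon>_def)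
    then have "packing_pre adm \<beta> {x} \<le> packing_pre_eps adm \<beta> \<epsilon> {x}"
      unfolding packing_pre_def by (intro INF_lower) auto
    also have "\<dots> \<le> ennreal e"
      unfolding packing_pre_eps_def
    proof (rule SUP_least)
      fix P assume "P \<in> {P. packing adm \<epsilon> {x} P}"
      then have P: "packing adm \<epsilon> {x} P" by simp
      have mem: "fst z < x \<and> x < snd z \<and> snd z - fst z \<le> \<epsilon>" if "z \<in> P" for z
        using packing_interval[OF P, of "fst z" "snd z"] that by auto
      have single: "z = z'" if "z \<in> P" "z' \<in> P" for z z'
      proof (rule ccontr)
        assume "z \<noteq> z'"
        then have "{fst z<..<snd z} \<inter> {fst z'<..<snd z'} = {}"
          using packing_disjoint[OF P that] by blast
        moreover have "x \<in> {fst z<..<snd z} \<inter> {fst z'<..<snd z'}"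
          using mem[OF that(1)] mem[OF that(2)] by simp
        ultimately show False by blast
      qed
      show "infsum (\<lambda>(a,b). ennreal ((b - a) powr \<beta>)) P \<le> ennreal e"
      proof (cases "P = {}")
        case False
        then obtain z where z: "z \<in> P" by blast
        then have "P = {z}" using single by blast
        have "(snd z - fst z) powr \<beta> \<le> \<epsilon> powr \<beta>"
          using mem[OF z] assms by (intro powr_mono2) auto
        also have "\<epsilon> powr \<beta> = e" unfolding \<epsilon>_def using e assms by (simp add: powr_powr)
        finally show ?thesis using \<open>P = {z}\<close> by (simp add: case_prod_unfold ennreal_leI)
      qed simp
    qed
    finally show ?thesis by simp
  qed
  then have "packing_pre adm \<beta> {x} \<le> 0" by (rule ennreal_le_epsilon)
  then show ?thesis by simp
qed

lemma packing_measure_le_remove_countable: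
  assumes "countable D" "\<beta> > 0" "E \<subseteq> (\<Union>j. C j)"
  shows "packing_measure adm \<beta> E \<le> (\<Sum>j. packing_pre adm \<beta> (C j - D))"
proof -
  \<comment> \<open>cover the points of D by singletons, which have packing premeasure 0\<close>
  define C' where "C' n = (if even n then C (n div 2) - D else {from_nat_into D (n div 2)})" for n
  have "E \<subseteq> (\<Union>n. C' n)"
  proof
    fix x assume x: "x \<in> E"
    show "x \<in> (\<Union>n. C' n)"
    proof (cases "x \<in> D")
      case True
      then have "x \<in> C' (2 * to_nat_on D x + 1)" using assms(1) by (simp add: C'_def)
      then show ?thesis by blast
    next
      case False
      obtain j where "x \<in> C j" using x assms(3) by auto
      then have "x \<in> C' (2 * j)" using False by (simp add: C'_def)
      then show ?thesis by blast
    qed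
  qed
  then have "packing_measure adm \<beta> E \<le> (\<Sum>n. packing_pre adm \<beta> (C' n))"
    unfolding packing_measure_def by (intro INF_lower) simp
  also have "\<dots> = (\<Sum>n. packing_pre adm \<beta> (C' (2 * n)))"
  proof -
    define f where "f n = packing_pre adm \<beta> (C' n)" for n
    have "(\<lambda>n. f (2 * n)) sums (\<Sum>n. f n) \<longleftrightarrow> f sums (\<Sum>n. f n)"
    proof (rule sums_mono_reindex)
      fix n assume "n \<notin> range (\<lambda>n::nat. 2 * n)"
      then have "odd n" by (metis evenE rangeI)
      then show "f n = 0" unfolding f_def C'_def using packing_pre_singleton[OF assms(2)] by simp
    qed (auto simp: strict_mono_def)
    then show ?thesis unfolding f_def using summableI sums_unique by blast
  qed
  also have "\<dots> = (\<Sum>j. packing_pre adm \<beta> (C j - D))" by (simp add: C'_def)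
  finally show ?thesis .
qed

lemma packing_dim_eqI:
  assumes "\<And>\<alpha>. packing_measure adm' \<alpha> E = 0 \<Longrightarrow> packing_measure adm \<alpha> E = 0"
    and "\<And>\<alpha> \<beta>. 0 \<le> \<alpha> \<Longrightarrow> \<alpha> < \<beta> \<Longrightarrow> packing_measure adm \<alpha> E = 0 \<Longrightarrow>
      packing_measure adm' \<beta> E = 0"
  shows "packing_dim adm E = packing_dim adm' E"
proof -
  define Z where "Z adm = {ereal \<alpha> | \<alpha>. \<alpha> \<ge> 0 \<and> packing_measure adm \<alpha> E = 0}" for adm
  have "Inf (Z adm') \<le> x" if "x \<in> Z adm" for x
  proof -
    obtain \<alpha> where \<alpha>: "x = ereal \<alpha>" "\<alpha> \<ge> 0" "packing_measure adm \<alpha> E = 0"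
      using \<open>x \<in> Z adm\<close> by (auto simp: Z_def)
    have below: "Inf (Z adm') \<le> ereal \<beta>" if "\<alpha> < \<beta>" for \<beta>
    proof (rule Inf_lower)
      have "\<beta> \<ge> 0" using \<alpha>(2) that by simp
      then show "ereal \<beta> \<in> Z adm'" using assms(2)[OF \<alpha>(2) that \<alpha>(3)] by (simp add: Z_def)
    qed
    show ?thesis unfolding \<alpha>(1)
    proof (rule dense_ge)
      fix y assume "ereal \<alpha> < y"
      then obtain \<beta> where "ereal \<alpha> < ereal \<beta>" "ereal \<beta> < y" using ereal_dense2 by blast
      then show "Inf (Z adm') \<le> y" using below[of \<beta>] by simp
    qed
  qed
  then have "Inf (Z adm') \<le> Inf (Z adm)" by (rule Inf_greatest)
  moreover have "Z adm' \<subseteq> Z adm" using assms(1) by (auto simp: Z_def)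
  then have "Inf (Z adm) \<le> Inf (Z adm')" by (rule Inf_superset_mono)
  ultimately show ?thesis unfolding packing_dim_def Z_def by simp
qed

locale Qstar_bounded_below =
  fixes s :: nat and q :: "nat \<Rightarrow> nat \<Rightarrow> real" and \<delta> :: real
  assumes two_le_s: "2 \<le> s" and Qstar: "Qstar_matrix s q" and \<delta>_pos: "0 < \<delta>"
    and \<delta>_le_q: "\<And>i k. i < s \<Longrightarrow> \<delta> \<le> q i k"
begin

abbreviation is_cyl :: "real set \<Rightarrow> bool" where
  "is_cyl I \<equiv> I \<in> Qstar_cyl_family s q"

lemma q_pos: "i < s \<Longrightarrow> 0 < q i k"
  using Qstar unfolding Qstar_matrix_def by auto

lemma q_nonneg: "i < s \<Longrightarrow> 0 \<le> q i k"
  using q_pos less_imp_le by blast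

lemma sum_q: "(\<Sum>i<s. q i k) = 1"
  using Qstar unfolding Qstar_matrix_def by auto

lemma qbeta_mono: "i \<le> j \<Longrightarrow> j \<le> s \<Longrightarrow> qbeta q i k \<le> qbeta q j k"
  unfolding qbeta_def by (intro sum_mono2) (auto intro: q_nonneg)

lemma qbeta_nonneg: "i \<le> s \<Longrightarrow> 0 \<le> qbeta q i k"
  using qbeta_mono[of 0 i] by (simp add: qbeta_def)

lemma qbeta_s: "qbeta q s k = 1"
  unfolding qbeta_def using sum_q by simp

lemma q_le_one_minus_\<delta>:
  assumes "i < s"
  shows "q i k \<le> 1 - \<delta>"
proof -
  define j where "j = (if i = 0 then 1 else 0::nat)"
  have j: "j < s" "j \<noteq> i" using two_le_s assms by (auto simp: j_def)
  have "q i k + q j k = (\<Sum>l\<in>{i, j}. q l k)" using j by simp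
  also have "\<dots> \<le> (\<Sum>l<s. q l k)" using j assms by (intro sum_mono2) (auto intro: q_nonneg)
  finally show ?thesis using sum_q[of k] \<delta>_le_q[OF j(1), of k] by simp
qed

lemma \<delta>_le_1: "\<delta> \<le> 1"
  using \<delta>_le_q[of 0 0] q_le_one_minus_\<delta>[of 0 0] two_le_s by simp

lemma cyl_len_pos: "set c \<subseteq> {..<s} \<Longrightarrow> 0 < cyl_len q c"
  unfolding cyl_len_def by (intro prod_pos) (meson lessThan_iff nth_mem q_pos subsetD)

lemma cyl_len_le_power: "set c \<subseteq> {..<s} \<Longrightarrow> cyl_len q c \<le> (1 - \<delta>) ^ length c"
proof (induction c rule: rev_induct)
  case Nil
  then show ?case by (simp add: cyl_len_def)
next
  case (snoc i c)
  then have c: "set c \<subseteq> {..<s}" and "i < s" by auto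
  have "cyl_len q (c @ [i]) = cyl_len q c * q i (length c)" by (rule cyl_len_snoc)
  also have "\<dots> \<le> (1 - \<delta>) ^ length c * (1 - \<delta>)"
    using snoc.IH[OF c] q_le_one_minus_\<delta>[OF \<open>i < s\<close>] cyl_len_pos[OF c] q_nonneg[OF \<open>i < s\<close>]
    by (intro mult_mono) auto
  finally show ?case by (simp add: mult.commute)
qed

lemma cyl_snoc_subset:
  assumes "set c \<subseteq> {..<s}" "i < s"
  shows "cyl_left q c \<le> cyl_left q (c @ [i])"
    and "cyl_left q (c @ [i]) + cyl_len q (c @ [i]) \<le> cyl_left q c + cyl_len q c"
proof -
  have L: "0 < cyl_len q c" using cyl_len_pos assms by auto
  show "cyl_left q c \<le> cyl_left q (c @ [i])"
    using L qbeta_nonneg[of i] assms(2) by (simp add: cyl_left_snoc)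
  have "qbeta q (Suc i) (length c) \<le> 1" using qbeta_mono[of "Suc i" s] qbeta_s assms by auto
  then have "(qbeta q i (length c) + q i (length c)) * cyl_len q c \<le> cyl_len q c"
    using L by (simp add: qbeta_Suc)
  then show "cyl_left q (c @ [i]) + cyl_len q (c @ [i]) \<le> cyl_left q c + cyl_len q c"
    by (simp add: cyl_left_snoc cyl_len_snoc algebra_simps)
qed

definition cyl_endpoints :: "real set" where
  "cyl_endpoints = {cyl_left q c | c. set c \<subseteq> {..<s}} \<union>
     {cyl_left q c + cyl_len q c | c. set c \<subseteq> {..<s}}"

lemma countable_cyl_endpoints: "countable cyl_endpoints"
proof -
  have "cyl_endpoints \<subseteq> range (cyl_left q) \<union> range (\<lambda>c. cyl_left q c + cyl_len q c)"
    unfolding cyl_endpoints_def by auto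
  then show ?thesis by (rule countable_subset) auto
qed

lemma zero_one_in_cyl_endpoints: "0 \<in> cyl_endpoints" "1 \<in> cyl_endpoints"
  unfolding cyl_endpoints_def by (auto intro!: exI[of _ "[]"] simp: cyl_left_def cyl_len_def)

text \<open>At each step the new digit is the largest one whose subcylinder starts left of x.\<close>

lemma ex_cyl_of_rank:
  assumes x: "x \<in> {0..1} - cyl_endpoints"
  shows "\<exists>c. length c = n \<and> set c \<subseteq> {..<s} \<and> cyl_left q c < x \<and> x < cyl_left q c + cyl_len q c"
proof (induction n)
  case 0
  have "x \<noteq> 0" "x \<noteq> 1" using x zero_one_in_cyl_endpoints by auto
  then show ?case using x by (auto simp: cyl_left_def cyl_len_def)
next
  case (Suc n)
  then obtain c where c: "length c = n" "set c \<subseteq> {..<s}" "cyl_left q c < x"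
    "x < cyl_left q c + cyl_len q c"
    by blast
  define L where "L = cyl_len q c"
  define I where "I = {i. i < s \<and> cyl_left q c + qbeta q i n * L < x}"
  have "0 \<in> I" using c two_le_s by (simp add: I_def qbeta_def)
  have "finite I" unfolding I_def by auto
  define i where "i = Max I"
  have "i \<in> I" using \<open>finite I\<close> \<open>0 \<in> I\<close> unfolding i_def by (intro Max_in) auto
  then have "i < s" and left: "cyl_left q c + qbeta q i n * L < x" by (auto simp: I_def)
  have ci: "set (c @ [i]) \<subseteq> {..<s}" using c \<open>i < s\<close> by auto
  have right_eq: "cyl_left q (c @ [i]) + cyl_len q (c @ [i]) = cyl_left q c + qbeta q (Suc i) n * L"
    by (simp add: cyl_left_snoc cyl_len_snoc qbeta_Suc c(1) L_def algebra_simps)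
  have left_eq: "cyl_left q (c @ [i]) = cyl_left q c + qbeta q i n * L"
    by (simp add: cyl_left_snoc c(1) L_def)
  have "x < cyl_left q c + qbeta q (Suc i) n * L"
  proof (cases "Suc i < s")
    case True
    then have "Suc i \<notin> I" using Max_ge[OF \<open>finite I\<close>, of "Suc i"] unfolding i_def by auto
    then have "x \<le> cyl_left q c + qbeta q (Suc i) n * L" using True by (auto simp: I_def)
    moreover have "x \<noteq> cyl_left q (c @ [i]) + cyl_len q (c @ [i])"
      using x ci unfolding cyl_endpoints_def by blast
    ultimately show ?thesis using right_eq by simp
  next
    case False
    then have "Suc i = s" using \<open>i < s\<close> by simp
    then show ?thesis using c qbeta_s by (simp add: L_def)
  qed
  then show ?case using left left_eq right_eq ci c(1) by (intro exI[of _ "c @ [i]"]) simp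
qed

text \<open>The shortest cylinder around x of length at most h has length at least \<delta> h, since
  its parent is longer than h and each digit shrinks the length by a factor at least \<delta>.\<close>

lemma ex_cyl_comparable:
  assumes x: "x \<in> {0..1} - cyl_endpoints" and h: "0 < h" "h \<le> 1"
  shows "\<exists>c. set c \<subseteq> {..<s} \<and> cyl_left q c < x \<and> x < cyl_left q c + cyl_len q c
            \<and> \<delta> * h \<le> cyl_len q c \<and> cyl_len q c \<le> h"
proof -
  define P where "P n \<longleftrightarrow> (\<exists>c. length c = n \<and> set c \<subseteq> {..<s} \<and> cyl_left q c < x
        \<and> x < cyl_left q c + cyl_len q c \<and> cyl_len q c \<le> h)" for n
  obtain n0 where n0: "(1 - \<delta>) ^ n0 < h"
    using real_arch_pow_inv[OF h(1), of "1 - \<delta>"] \<delta>_pos by auto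
  obtain c0 where c0: "length c0 = n0" "set c0 \<subseteq> {..<s}" "cyl_left q c0 < x"
    "x < cyl_left q c0 + cyl_len q c0"
    using ex_cyl_of_rank[OF x] by blast
  have "P n0" unfolding P_def using c0 cyl_len_le_power[OF c0(2)] n0 by (intro exI[of _ c0]) auto
  define n where "n = (LEAST n. P n)"
  have "P n" unfolding n_def by (rule LeastI[of P, OF \<open>P n0\<close>])
  then obtain c where c: "length c = n" "set c \<subseteq> {..<s}" "cyl_left q c < x"
     "x < cyl_left q c + cyl_len q c" "cyl_len q c \<le> h"
    unfolding P_def by blast
  show ?thesis
  proof (cases n)
    case 0
    then have "cyl_len q c = 1" using c by (simp add: cyl_len_def)
    moreover have "\<delta> * h \<le> 1" using \<delta>_le_1 h \<delta>_pos by (simp add: mult_le_one)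
    ultimately show ?thesis using c by (intro exI[of _ c]) simp
  next
    case (Suc m)
    then obtain c' i where ceq: "c = c' @ [i]" using c(1) by (metis length_Suc_conv_rev)
    have c': "set c' \<subseteq> {..<s}" "i < s" "length c' = m" using c(1,2) Suc unfolding ceq by auto
    have "\<not> P m" using Suc unfolding n_def by (metis lessI not_less_Least)
    moreover have "cyl_left q c' < x" "x < cyl_left q c' + cyl_len q c'"
      using cyl_snoc_subset[OF c'(1,2)] c(3,4) unfolding ceq by linarith+
    ultimately have "h < cyl_len q c'" unfolding P_def using c' by force
    then have "\<delta> * h \<le> q i m * cyl_len q c'"
      using \<delta>_le_q[OF c'(2), of m] \<delta>_pos h by (intro mult_mono) auto
    also have "\<dots> = cyl_len q c" unfolding ceq by (simp add: cyl_len_snoc c'(3))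
    finally show ?thesis using c by (intro exI[of _ c]) simp
  qed
qed

lemma ex_cyl_in_packing:
  assumes F: "F \<subseteq> {0..1} - cyl_endpoints"
    and P: "packing (\<lambda>_. True) \<epsilon> F P" and short: "\<And>p. p \<in> P \<Longrightarrow> snd p - fst p \<le> 1"
  obtains X J where "\<And>p. p \<in> P \<Longrightarrow> X p \<in> {fst p<..<snd p} \<inter> F \<and>
      X p \<in> {fst (J p)<..<snd (J p)} \<and> is_cyl {fst (J p)<..<snd (J p)} \<and>
      \<delta> * (snd p - fst p) \<le> snd (J p) - fst (J p) \<and> snd (J p) - fst (J p) \<le> snd p - fst p"
proof -
  have "\<forall>p\<in>P. \<exists>x c. x \<in> {fst p<..<snd p} \<inter> F \<and> set c \<subseteq> {..<s}
      \<and> x \<in> {cyl_left q c<..<cyl_left q c + cyl_len q c}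
      \<and> \<delta> * (snd p - fst p) \<le> cyl_len q c \<and> cyl_len q c \<le> snd p - fst p"
  proof
    fix p assume p: "p \<in> P"
    have "{fst p<..<snd p} \<inter> F \<noteq> {}" using packing_interval(4)[OF P, of "fst p" "snd p"] p by simp
    then obtain x where x: "x \<in> {fst p<..<snd p} \<inter> F" by blast
    then have "x \<in> {0..1} - cyl_endpoints" "0 < snd p - fst p" using F by auto
    from ex_cyl_comparable[OF this short[OF p]] obtain c where "set c \<subseteq> {..<s}"
      "x \<in> {cyl_left q c<..<cyl_left q c + cyl_len q c}"
      "\<delta> * (snd p - fst p) \<le> cyl_len q c" "cyl_len q c \<le> snd p - fst p"
      by auto
    with x show "\<exists>x c. x \<in> {fst p<..<snd p} \<inter> F \<and> set c \<subseteq> {..<s}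
      \<and> x \<in> {cyl_left q c<..<cyl_left q c + cyl_len q c}
      \<and> \<delta> * (snd p - fst p) \<le> cyl_len q c \<and> cyl_len q c \<le> snd p - fst p"
      by blast
  qed
  then obtain X where "\<forall>p\<in>P. \<exists>c. X p \<in> {fst p<..<snd p} \<inter> F \<and> set c \<subseteq> {..<s}
      \<and> X p \<in> {cyl_left q c<..<cyl_left q c + cyl_len q c}
      \<and> \<delta> * (snd p - fst p) \<le> cyl_len q c \<and> cyl_len q c \<le> snd p - fst p"
    by (rule bchoice[elim_format]) blast
  then obtain C where XC: "\<forall>p\<in>P. X p \<in> {fst p<..<snd p} \<inter> F \<and> set (C p) \<subseteq> {..<s}
      \<and> X p \<in> {cyl_left q (C p)<..<cyl_left q (C p) + cyl_len q (C p)}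
      \<and> \<delta> * (snd p - fst p) \<le> cyl_len q (C p) \<and> cyl_len q (C p) \<le> snd p - fst p"
    by (rule bchoice[elim_format]) blast
  define J where "J p = (cyl_left q (C p), cyl_left q (C p) + cyl_len q (C p))" for p
  have "is_cyl {fst (J p)<..<snd (J p)}" if "p \<in> P" for p
    using bspec[OF XC that] unfolding J_def Qstar_cyl_family_def by auto
  then show ?thesis using bspec[OF XC] by (intro that[of X J]) (simp add: J_def)
qed

lemma cyl_packing_at_scale:
  assumes F: "F \<subseteq> {0..1} - cyl_endpoints" and "0 < h" "h \<le> 1"
    and P: "finite P" "packing (\<lambda>_. True) \<epsilon> F P"
    and scale: "\<And>p. p \<in> P \<Longrightarrow> h / 2 < snd p - fst p \<and> snd p - fst p \<le> h"
  shows "\<exists>Q. finite Q \<and> packing is_cyl \<epsilon> F Q \<and> card P \<le> 12 * card Q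
             \<and> (\<forall>p\<in>Q. \<delta> * (h / 2) \<le> snd p - fst p)"
proof -
  have "snd p - fst p \<le> 1" if "p \<in> P" for p using scale[OF that] \<open>h \<le> 1\<close> by linarith
  then obtain X J where XJ: "\<And>p. p \<in> P \<Longrightarrow> X p \<in> {fst p<..<snd p} \<inter> F \<and>
      X p \<in> {fst (J p)<..<snd (J p)} \<and> is_cyl {fst (J p)<..<snd (J p)} \<and>
      \<delta> * (snd p - fst p) \<le> snd (J p) - fst (J p) \<and> snd (J p) - fst (J p) \<le> snd p - fst p"
    using ex_cyl_in_packing[OF F P(2)] by blast
  obtain B where B: "B \<subseteq> P" "inj_on J B" "card P \<le> 12 * card B"
    "\<forall>p\<in>B. \<forall>p'\<in>B. p \<noteq> p' \<longrightarrow> {fst (J p)<..<snd (J p)} \<inter> {fst (J p')<..<snd (J p')} = {}"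
  proof (rule disjoint_subfamily_at_scale[of P h X J, THEN exE])
    show "\<forall>p\<in>P. \<forall>p'\<in>P. p \<noteq> p' \<longrightarrow> {fst p<..<snd p} \<inter> {fst p'<..<snd p'} = {}"
      using packing_disjoint[OF P(2)] by blast
    show "X p \<in> {fst p<..<snd p} \<inter> {fst (J p)<..<snd (J p)} \<and> snd (J p) - fst (J p) \<le> h"
      if "p \<in> P" for p
      using XJ[OF that] scale[OF that] by auto
  qed (use P(1) \<open>0 < h\<close> scale in auto)
  have "finite (J ` B)" using B(1) P(1) finite_subset by blast
  moreover have "card (J ` B) = card B" using B(2) by (rule card_image)
  moreover have "packing is_cyl \<epsilon> F (J ` B)"
    unfolding packing_def
  proof (intro conjI)
    show "countable (J ` B)" using \<open>finite (J ` B)\<close> by (rule countable_finite)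
    show "\<forall>(a, b)\<in>J ` B. a < b \<and> is_cyl {a<..<b} \<and> b - a \<le> \<epsilon> \<and> {a<..<b} \<inter> F \<noteq> {}"
    proof (intro ballI, clarify)
      fix a b p assume "p \<in> B" "(a, b) = J p"
      then have "p \<in> P" "a = fst (J p)" "b = snd (J p)" using B(1) by (auto simp: prod_eq_iff)
      then show "a < b \<and> is_cyl {a<..<b} \<and> b - a \<le> \<epsilon> \<and> {a<..<b} \<inter> F \<noteq> {}"
        using XJ[OF \<open>p \<in> P\<close>] packing_interval[OF P(2), of "fst p" "snd p"] by auto
    qed
    show "\<forall>z\<in>J ` B. \<forall>z'\<in>J ` B. z \<noteq> z' \<longrightarrow> {fst z<..<snd z} \<inter> {fst z'<..<snd z'} = {}"
      using B(4) by auto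
  qed
  moreover have "\<delta> * (h / 2) \<le> snd z - fst z" if "z \<in> J ` B" for z
  proof -
    obtain p where "p \<in> P" "z = J p" using \<open>z \<in> J ` B\<close> B(1) by blast
    have "\<delta> * (h / 2) \<le> \<delta> * (snd p - fst p)"
      using scale[OF \<open>p \<in> P\<close>] \<delta>_pos by (intro mult_left_mono) auto
    then show ?thesis using XJ[OF \<open>p \<in> P\<close>] unfolding \<open>z = J p\<close> by linarith
  qed
  ultimately show ?thesis using B(3) by (intro exI[of _ "J ` B"]) auto
qed

definition cyl_packing_const :: "real \<Rightarrow> real \<Rightarrow> real" where
  "cyl_packing_const \<alpha> \<beta> = 12 * (2 / \<delta>) powr \<alpha> / (1 - 2 powr (\<alpha> - \<beta>))"

lemma cyl_packing_const_pos: "\<alpha> < \<beta> \<Longrightarrow> 0 < cyl_packing_const \<alpha> \<beta>"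
  unfolding cyl_packing_const_def using \<delta>_pos by (simp add: powr_less_one)

lemma sum_powr_at_scale_le:
  assumes F: "F \<subseteq> {0..1} - cyl_endpoints" and "0 \<le> \<alpha>" "\<alpha> \<le> \<beta>"
    and P: "finite P" "packing (\<lambda>_. True) \<epsilon> F P"
    and scale: "\<And>p. p \<in> P \<Longrightarrow> (1/2) ^ Suc m < snd p - fst p \<and> snd p - fst p \<le> (1/2) ^ m"
    and S: "\<And>Q. finite Q \<Longrightarrow> packing is_cyl \<epsilon> F Q \<Longrightarrow> (\<Sum>p\<in>Q. (snd p - fst p) powr \<alpha>) \<le> S"
  shows "(\<Sum>p\<in>P. (snd p - fst p) powr \<beta>) \<le> 12 * S * (2 / \<delta>) powr \<alpha> * (2 powr (\<alpha> - \<beta>)) ^ m"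
proof -
  define h where "h = (1/2::real) ^ m"
  have "0 < h" "h \<le> 1" by (simp_all add: h_def power_le_one)
  have scale_h: "h / 2 < snd p - fst p \<and> snd p - fst p \<le> h" if "p \<in> P" for p
    using scale[OF that] by (simp add: h_def)
  obtain Q where Q: "finite Q" "packing is_cyl \<epsilon> F Q" "card P \<le> 12 * card Q"
    and long: "\<forall>p\<in>Q. \<delta> * (h / 2) \<le> snd p - fst p"
    using cyl_packing_at_scale[OF F \<open>0 < h\<close> \<open>h \<le> 1\<close> P scale_h] by blast
  have "real (card Q) * (\<delta> * (h / 2)) powr \<alpha> = (\<Sum>p\<in>Q. (\<delta> * (h / 2)) powr \<alpha>)" by simp
  also have "\<dots> \<le> (\<Sum>p\<in>Q. (snd p - fst p) powr \<alpha>)"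
    using long \<open>0 \<le> \<alpha>\<close> \<delta>_pos \<open>0 < h\<close> by (intro sum_mono powr_mono2) auto
  also have "\<dots> \<le> S" using S Q(1,2) .
  finally have card_Q: "real (card Q) * (\<delta> * (h / 2)) powr \<alpha> \<le> S" .
  have h_powr: "h powr \<beta> = (\<delta> * (h / 2)) powr \<alpha> * ((2 / \<delta>) powr \<alpha> * (2 powr (\<alpha> - \<beta>)) ^ m)"
  proof -
    have h_\<alpha>: "h powr \<alpha> = (\<delta> * (h / 2)) powr \<alpha> * (2 / \<delta>) powr \<alpha>"
      using \<delta>_pos \<open>0 < h\<close> by (simp add: powr_mult[symmetric])
    have h_\<beta>\<alpha>: "h powr (\<beta> - \<alpha>) = (2 powr (\<alpha> - \<beta>)) ^ m"
      unfolding h_def by (simp add: half_power_powr)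
    have "h powr \<beta> = h powr \<alpha> * h powr (\<beta> - \<alpha>)" by (simp flip: powr_add)
    then show ?thesis by (simp only: h_\<alpha> h_\<beta>\<alpha> mult.assoc)
  qed
  have "(\<Sum>p\<in>P. (snd p - fst p) powr \<beta>) \<le> real (card P) * h powr \<beta>"
  proof (rule sum_bounded_above)
    fix p assume "p \<in> P"
    then have "0 \<le> snd p - fst p" "snd p - fst p \<le> h" using scale_h[of p] \<open>0 < h\<close> by auto
    then show "(snd p - fst p) powr \<beta> \<le> h powr \<beta>"
      using \<open>0 \<le> \<alpha>\<close> \<open>\<alpha> \<le> \<beta>\<close> by (intro powr_mono2) auto
  qed
  also have "\<dots> \<le> 12 * real (card Q) * h powr \<beta>"
    using Q(3) by (intro mult_right_mono) auto
  also have "\<dots> = 12 * (real (card Q) * (\<delta> * (h / 2)) powr \<alpha>) * ((2 / \<delta>) powr \<alpha> * (2 powr (\<alpha> - \<beta>)) ^ m)"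
    unfolding h_powr by (simp add: mult.assoc)
  also have "\<dots> \<le> 12 * S * ((2 / \<delta>) powr \<alpha> * (2 powr (\<alpha> - \<beta>)) ^ m)"
    using card_Q by (intro mult_right_mono) auto
  finally show ?thesis by (simp add: mult.assoc)
qed

text \<open>Grouping the intervals of a finite packing by dyadic length scale, scale m contributes
  a multiple of (2 powr (\<alpha> - \<beta>)) ^ m, so the total is bounded by a geometric series.\<close>

lemma finite_packing_sum_le:
  assumes F: "F \<subseteq> {0..1} - cyl_endpoints" and "\<epsilon> \<le> 1" "0 \<le> \<alpha>" "\<alpha> < \<beta>"
    and P: "finite P" "packing (\<lambda>_. True) \<epsilon> F P"
    and S: "\<And>Q. finite Q \<Longrightarrow> packing is_cyl \<epsilon> F Q \<Longrightarrow> (\<Sum>p\<in>Q. (snd p - fst p) powr \<alpha>) \<le> S"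
  shows "(\<Sum>p\<in>P. (snd p - fst p) powr \<beta>) \<le> cyl_packing_const \<alpha> \<beta> * S"
proof -
  have "0 \<le> S" using S[of "{}"] by (simp add: packing_def)
  have "\<forall>p\<in>P. \<exists>m. (1/2) ^ Suc m < snd p - fst p \<and> snd p - fst p \<le> (1/2) ^ m"
  proof
    fix p assume "p \<in> P"
    then have "0 < snd p - fst p" "snd p - fst p \<le> 1"
      using packing_interval[OF P(2), of "fst p" "snd p"] \<open>\<epsilon> \<le> 1\<close> by auto
    then show "\<exists>m. (1/2) ^ Suc m < snd p - fst p \<and> snd p - fst p \<le> (1/2) ^ m"
      by (rule ex_dyadic_scale)
  qed
  then obtain M where M: "\<forall>p\<in>P. (1/2) ^ Suc (M p) < snd p - fst p \<and> snd p - fst p \<le> (1/2) ^ M p"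
    by (rule bchoice[elim_format]) blast
  define r where "r = (2::real) powr (\<alpha> - \<beta>)"
  have "0 \<le> r" "r < 1" using \<open>\<alpha> < \<beta>\<close> unfolding r_def by (auto intro!: powr_less_one)
  have "(\<Sum>p\<in>P. (snd p - fst p) powr \<beta>)
      = (\<Sum>m\<in>M ` P. \<Sum>p\<in>{p\<in>P. M p = m}. (snd p - fst p) powr \<beta>)"
    by (rule sum.group[symmetric]) (auto simp: P(1))
  also have "\<dots> \<le> (\<Sum>m\<in>M ` P. 12 * S * (2 / \<delta>) powr \<alpha> * r ^ m)"
  proof (intro sum_mono)
    fix m
    have "packing (\<lambda>_. True) \<epsilon> F {p\<in>P. M p = m}" by (rule packing_mono[OF P(2)]) auto
    then show "(\<Sum>p\<in>{p\<in>P. M p = m}. (snd p - fst p) powr \<beta>) \<le> 12 * S * (2 / \<delta>) powr \<alpha> * r ^ m"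
      unfolding r_def using F \<open>0 \<le> \<alpha>\<close> \<open>\<alpha> < \<beta>\<close> P(1) M S
      by (intro sum_powr_at_scale_le) auto
  qed
  also have "\<dots> = 12 * S * (2 / \<delta>) powr \<alpha> * (\<Sum>m\<in>M ` P. r ^ m)" by (simp add: sum_distrib_left)
  also have "\<dots> \<le> 12 * S * (2 / \<delta>) powr \<alpha> * (1 / (1 - r))"
    using \<open>0 \<le> S\<close> P(1) \<open>0 \<le> r\<close> \<open>r < 1\<close> by (intro mult_left_mono sum_power_le_geometric finite_imageI) auto
  also have "\<dots> = cyl_packing_const \<alpha> \<beta> * S" unfolding cyl_packing_const_def r_def by simp
  finally show ?thesis .
qed

lemma packing_pre_eps_le:
  assumes F: "F \<subseteq> {0..1} - cyl_endpoints" and "0 < \<epsilon>" "\<epsilon> \<le> 1" "0 \<le> \<alpha>" "\<alpha> < \<beta>"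
  shows "packing_pre_eps (\<lambda>_. True) \<beta> \<epsilon> F \<le> ennreal (cyl_packing_const \<alpha> \<beta>) * packing_pre_eps is_cyl \<alpha> \<epsilon> F"
proof (cases "packing_pre_eps is_cyl \<alpha> \<epsilon> F")
  case (real S)
  have S: "(\<Sum>p\<in>Q. (snd p - fst p) powr \<alpha>) \<le> S" if "finite Q" "packing is_cyl \<epsilon> F Q" for Q
  proof -
    have "ennreal (\<Sum>p\<in>Q. (snd p - fst p) powr \<alpha>) = (\<Sum>p\<in>Q. ennreal ((snd p - fst p) powr \<alpha>))"
      by (rule sum_ennreal[symmetric]) simp
    also have "\<dots> = infsum (\<lambda>(a,b). ennreal ((b - a) powr \<alpha>)) Q"
      using \<open>finite Q\<close> by (simp add: case_prod_unfold)
    also have "\<dots> \<le> packing_pre_eps is_cyl \<alpha> \<epsilon> F"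
      unfolding packing_pre_eps_def using that(2) by (intro SUP_upper) simp
    finally show ?thesis using real by simp
  qed
  show ?thesis
    unfolding packing_pre_eps_def[of "\<lambda>_. True"]
  proof (rule SUP_least)
    fix P assume "P \<in> {P. packing (\<lambda>_. True) \<epsilon> F P}"
    then have P: "packing (\<lambda>_. True) \<epsilon> F P" by simp
    show "infsum (\<lambda>(a,b). ennreal ((b - a) powr \<beta>)) P
        \<le> ennreal (cyl_packing_const \<alpha> \<beta>) * packing_pre_eps is_cyl \<alpha> \<epsilon> F"
      unfolding infsum_powr_eq_SUP_finite
    proof (rule SUP_least)
      fix G assume "G \<in> {G. finite G \<and> G \<subseteq> P}"
      then have "finite G" "G \<subseteq> P" by auto
      then have "packing (\<lambda>_. True) \<epsilon> F G"
        using packing_mono[OF P _ order_refl subset_refl \<open>G \<subseteq> P\<close>] by simp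
      then have "(\<Sum>p\<in>G. (snd p - fst p) powr \<beta>) \<le> cyl_packing_const \<alpha> \<beta> * S"
        by (rule finite_packing_sum_le[OF F \<open>\<epsilon> \<le> 1\<close> \<open>0 \<le> \<alpha>\<close> \<open>\<alpha> < \<beta>\<close> \<open>finite G\<close> _ S])
      then have "ennreal (\<Sum>p\<in>G. (snd p - fst p) powr \<beta>) \<le> ennreal (cyl_packing_const \<alpha> \<beta> * S)"
        by (rule ennreal_leI)
      also have "\<dots> = ennreal (cyl_packing_const \<alpha> \<beta>) * packing_pre_eps is_cyl \<alpha> \<epsilon> F"
        using real cyl_packing_const_pos[OF \<open>\<alpha> < \<beta>\<close>] by (simp add: ennreal_mult)
      finally show "ennreal (\<Sum>p\<in>G. (snd p - fst p) powr \<beta>)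
          \<le> ennreal (cyl_packing_const \<alpha> \<beta>) * packing_pre_eps is_cyl \<alpha> \<epsilon> F" .
    qed
  qed
next
  case top
  then show ?thesis using cyl_packing_const_pos[OF \<open>\<alpha> < \<beta>\<close>] by (simp add: ennreal_mult_top)
qed

lemma packing_pre_le:
  assumes F: "F \<subseteq> {0..1} - cyl_endpoints" and "0 \<le> \<alpha>" "\<alpha> < \<beta>"
  shows "packing_pre (\<lambda>_. True) \<beta> F \<le> ennreal (cyl_packing_const \<alpha> \<beta>) * packing_pre is_cyl \<alpha> F"
proof (rule ennreal_le_mult_if_greater[OF cyl_packing_const_pos[OF \<open>\<alpha> < \<beta>\<close>]])
  fix y assume "packing_pre is_cyl \<alpha> F < y"
  then obtain \<epsilon> where "0 < \<epsilon>" "packing_pre_eps is_cyl \<alpha> \<epsilon> F < y"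
    unfolding packing_pre_def by (auto simp: INF_less_iff)
  define \<epsilon>' where "\<epsilon>' = min \<epsilon> 1"
  have "0 < \<epsilon>'" "\<epsilon>' \<le> 1" "\<epsilon>' \<le> \<epsilon>" using \<open>0 < \<epsilon>\<close> by (auto simp: \<epsilon>'_def)
  then have "packing_pre (\<lambda>_. True) \<beta> F \<le> packing_pre_eps (\<lambda>_. True) \<beta> \<epsilon>' F"
    unfolding packing_pre_def by (intro INF_lower) auto
  also have "\<dots> \<le> ennreal (cyl_packing_const \<alpha> \<beta>) * packing_pre_eps is_cyl \<alpha> \<epsilon>' F"
    using packing_pre_eps_le[OF F \<open>0 < \<epsilon>'\<close> \<open>\<epsilon>' \<le> 1\<close> assms(2,3)] .
  also have "\<dots> \<le> ennreal (cyl_packing_const \<alpha> \<beta>) * packing_pre_eps is_cyl \<alpha> \<epsilon> F"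
    by (intro mult_left_mono packing_pre_eps_mono \<open>\<epsilon>' \<le> \<epsilon>\<close>) auto
  also have "\<dots> \<le> ennreal (cyl_packing_const \<alpha> \<beta>) * y"
    using \<open>packing_pre_eps is_cyl \<alpha> \<epsilon> F < y\<close> by (intro mult_left_mono) auto
  finally show "packing_pre (\<lambda>_. True) \<beta> F \<le> ennreal (cyl_packing_const \<alpha> \<beta>) * y" .
qed

lemma packing_measure_le:
  assumes E: "E \<subseteq> {0..1}" and "0 \<le> \<alpha>" "\<alpha> < \<beta>"
  shows "packing_measure (\<lambda>_. True) \<beta> E \<le> ennreal (cyl_packing_const \<alpha> \<beta>) * packing_measure is_cyl \<alpha> E"
proof (rule ennreal_le_mult_if_greater[OF cyl_packing_const_pos[OF \<open>\<alpha> < \<beta>\<close>]])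
  fix y assume "packing_measure is_cyl \<alpha> E < y"
  then obtain C where C: "E \<subseteq> (\<Union>j. C j)" "(\<Sum>j. packing_pre is_cyl \<alpha> (C j)) < y"
    unfolding packing_measure_def by (auto simp: INF_less_iff)
  have "E \<subseteq> (\<Union>j. C j \<inter> {0..1})" using C(1) E by blast
  then have "packing_measure (\<lambda>_. True) \<beta> E
      \<le> (\<Sum>j. packing_pre (\<lambda>_. True) \<beta> (C j \<inter> {0..1} - cyl_endpoints))"
    using countable_cyl_endpoints \<open>0 \<le> \<alpha>\<close> \<open>\<alpha> < \<beta>\<close>
    by (intro packing_measure_le_remove_countable) auto
  also have "\<dots> \<le> (\<Sum>j. ennreal (cyl_packing_const \<alpha> \<beta>) * packing_pre is_cyl \<alpha> (C j))"
  proof (intro suminf_le summableI)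
    fix j
    have "packing_pre (\<lambda>_. True) \<beta> (C j \<inter> {0..1} - cyl_endpoints)
        \<le> ennreal (cyl_packing_const \<alpha> \<beta>) * packing_pre is_cyl \<alpha> (C j \<inter> {0..1} - cyl_endpoints)"
      using assms(2,3) by (intro packing_pre_le) auto
    also have "\<dots> \<le> ennreal (cyl_packing_const \<alpha> \<beta>) * packing_pre is_cyl \<alpha> (C j)"
      by (intro mult_left_mono packing_pre_mono) auto
    finally show "packing_pre (\<lambda>_. True) \<beta> (C j \<inter> {0..1} - cyl_endpoints)
        \<le> ennreal (cyl_packing_const \<alpha> \<beta>) * packing_pre is_cyl \<alpha> (C j)" .
  qed
  also have "\<dots> = ennreal (cyl_packing_const \<alpha> \<beta>) * (\<Sum>j. packing_pre is_cyl \<alpha> (C j))"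
    by (rule ennreal_suminf_cmult)
  also have "\<dots> \<le> ennreal (cyl_packing_const \<alpha> \<beta>) * y"
    using C(2) by (intro mult_left_mono) auto
  finally show "packing_measure (\<lambda>_. True) \<beta> E \<le> ennreal (cyl_packing_const \<alpha> \<beta>) * y" .
qed

lemma packing_dim_cyl_eq_unc:
  assumes "E \<subseteq> {0..1}"
  shows "packing_dim is_cyl E = packing_dim (\<lambda>_. True) E"
proof (rule packing_dim_eqI)
  fix \<alpha> assume "packing_measure (\<lambda>_. True) \<alpha> E = 0"
  then show "packing_measure is_cyl \<alpha> E = 0"
    using packing_measure_mono[of is_cyl "\<lambda>_. True" \<alpha> E] by simp
next
  fix \<alpha> \<beta> :: real assume "0 \<le> \<alpha>" "\<alpha> < \<beta>" "packing_measure is_cyl \<alpha> E = 0"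
  then show "packing_measure (\<lambda>_. True) \<beta> E = 0"
    using packing_measure_le[OF assms \<open>0 \<le> \<alpha>\<close> \<open>\<alpha> < \<beta>\<close>] by simp
qed

end

theorem corollary2:
  fixes s :: nat and q :: "nat \<Rightarrow> nat \<Rightarrow> real"
  assumes "s \<ge> 2"
    and "Qstar_matrix s q"
    and "\<exists>\<delta>>0. \<forall>i<s. \<forall>k. q i k \<ge> \<delta>"
  shows "\<forall>E. E \<subseteq> {0..1} \<longrightarrow>
           packing_dim_fam E (Qstar_cyl_family s q) = packing_dim_unc E"
proof -
  obtain \<delta> where "\<delta> > 0" "\<forall>i<s. \<forall>k. q i k \<ge> \<delta>" using assms(3) by blast
  then interpret Qstar_bounded_below s q \<delta> using assms(1,2) by unfold_locales auto
  show ?thesis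
    unfolding packing_dim_fam_def packing_dim_unc_def using packing_dim_cyl_eq_unc by blast
qed

end
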